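(* Let $r\ge 2$ be a constant. For $n\ge 2r$ define $\mathrm{Fork}_{n,r}:\{0,1\}^n\to\mathbb{R}$ by $\mathrm{Fork}_{n,r}(x)=n+1$ if $x=0^r1^{n-r}$, $\mathrm{Fork}_{n,r}(x)=n+2$ if $x=1^{n-r}0^r$, and $\mathrm{Fork}_{n,r}(x)=|x|_1$ (the number of ones in $x$) otherwise. Consider the function class $\mathcal{F}_{n,r}=\{\mathrm{Fork}_{n,r}\circ\sigma : \sigma \text{ an automorphism of the hypercube } \{0,1\}^n\}$. Then the unrestricted black-box complexity of $\mathcal{F}_{n,r}$ is $\Theta(n^r)$.
   Context: The unrestricted black-box complexity of a function class $\mathcal{F}$ is the minimum, over all (randomized) black-box algorithms $A$, of the maximum over $f\in\mathcal{F}$ of the expected number of function evaluations $A$ makes until it queries an optimum of $f$; the algorithm may choose its queries depending on all previously queried points and their function values. *)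

theory Defs
  imports "HOL-Probability.Probability"
begin

definition cube :: "nat \<Rightarrow> bool list set" where
  "cube n = {x. length x = n}"

definition hc_adj :: "bool list \<Rightarrow> bool list \<Rightarrow> bool" where
  "hc_adj x y \<longleftrightarrow> length x = length y \<and> card {i. i < length x \<and> x ! i \<noteq> y ! i} = 1"

definition hypercube_aut :: "nat \<Rightarrow> (bool list \<Rightarrow> bool list) \<Rightarrow> bool" where
  "hypercube_aut n \<sigma> \<longleftrightarrow> bij_betw \<sigma> (cube n) (cube n) \<and>
     (\<forall>x\<in>cube n. \<forall>y\<in>cube n. hc_adj x y \<longleftrightarrow> hc_adj (\<sigma> x) (\<sigma> y))"

definition ones :: "bool list \<Rightarrow> nat" where
  "ones x = length (filter id x)"

definition Fork :: "nat \<Rightarrow> nat \<Rightarrow> bool list \<Rightarrow> real" where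
  "Fork n r x =
     (if x = replicate r False @ replicate (n - r) True then real n + 1
      else if x = replicate (n - r) True @ replicate r False then real n + 2
      else real (ones x))"

definition Fork_class :: "nat \<Rightarrow> nat \<Rightarrow> (bool list \<Rightarrow> real) set" where
  "Fork_class n r = {(\<lambda>x. Fork n r (\<sigma> x)) | \<sigma>. hypercube_aut n \<sigma>}"

text \<open>A history is the list of queried points with their function values.
  A randomized black-box algorithm maps every history to a distribution of the next query.\<close>
type_synonym history = "(bool list \<times> real) list"
type_synonym bb_alg = "history \<Rightarrow> bool list pmf"

definition valid_alg :: "nat \<Rightarrow> bb_alg \<Rightarrow> bool" where
  "valid_alg n A \<longleftrightarrow> (\<forall>h. set_pmf (A h) \<subseteq> cube n)"

fun run :: "bb_alg \<Rightarrow> (bool list \<Rightarrow> real) \<Rightarrow> nat \<Rightarrow> history pmf" where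
  "run A f 0 = return_pmf []"
| "run A f (Suc t) = bind_pmf (run A f t) (\<lambda>h. map_pmf (\<lambda>x. h @ [(x, f x)]) (A h))"

definition is_opt :: "nat \<Rightarrow> (bool list \<Rightarrow> real) \<Rightarrow> bool list \<Rightarrow> bool" where
  "is_opt n f x \<longleftrightarrow> x \<in> cube n \<and> (\<forall>y\<in>cube n. f y \<le> f x)"

text \<open>Expected number of evaluations until an optimum is queried:
  E[T] = sum over t of P(T > t), where T > t iff none of the first t queries is optimal.\<close>
definition expected_opt_time :: "nat \<Rightarrow> bb_alg \<Rightarrow> (bool list \<Rightarrow> real) \<Rightarrow> ennreal" where
  "expected_opt_time n A f =
     (\<Sum>t. ennreal (measure_pmf.prob (run A f t) {h. \<forall>p\<in>set h. \<not> is_opt n f (fst p)}))"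

definition bb_complexity :: "nat \<Rightarrow> (bool list \<Rightarrow> real) set \<Rightarrow> ennreal" where
  "bb_complexity n F = (INF A\<in>{A. valid_alg n A}. SUP f\<in>F. expected_opt_time n A f)"

end

(*
  Upper bound: automorphisms of the hypercube preserve Hamming distance, and away from the
  optimum the value of Fork (sigma x) determines the distance from x to z = sigma^-1 (1^n)
  (the decoy value n + 1 stands for distance r). The answers at 0^n and at the n unit vectors
  therefore reveal z, and the optimum lies on the sphere of radius r around z, which is
  enumerated in at most n choose r further queries.

  Lower bound: for each r-subset S of the last n - r coordinates, a coordinate permutation
  fixing the decoy moves the optimum to the point that is 0 exactly on S, and all these
  functions agree with one function g away from their own optimum. A run on such a function
  coincides with the run on g until its optimum is queried, and t queries hit at most t of the
  (n - r) choose r candidates. Summing over t, the average expected optimisation time is at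
  least half the number of candidates, which is of order n^r.
*)

theory Submission
  imports Defs
begin

section \<open>Hamming distance and hypercube automorphisms\<close>

definition hdist :: "bool list \<Rightarrow> bool list \<Rightarrow> nat" where
  "hdist x y = card {i. i < length x \<and> x ! i \<noteq> y ! i}"

lemma hdist_conv_zip:
  "length x = length y \<Longrightarrow> hdist x y = length (filter (\<lambda>(a, b). a \<noteq> b) (zip x y))"
  unfolding hdist_def length_filter_conv_card by (intro arg_cong[where f = card]) (auto simp: nth_zip)

lemma hdist_self [simp]: "hdist x x = 0"
  unfolding hdist_def by simp

lemma hdist_eq_0_iff: "length x = length y \<Longrightarrow> hdist x y = 0 \<longleftrightarrow> x = y"
  unfolding hdist_def by (auto intro: nth_equalityI)

lemma hdist_triangle:
  assumes "length x = length y" "length y = length z"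
  shows "hdist x z \<le> hdist x y + hdist y z"
proof -
  have "{i. i < length x \<and> x ! i \<noteq> z ! i}
      \<subseteq> {i. i < length x \<and> x ! i \<noteq> y ! i} \<union> {i. i < length y \<and> y ! i \<noteq> z ! i}"
    using assms by auto
  then have "hdist x z \<le> card ({i. i < length x \<and> x ! i \<noteq> y ! i} \<union> {i. i < length y \<and> y ! i \<noteq> z ! i})"
    unfolding hdist_def by (intro card_mono) auto
  also have "\<dots> \<le> hdist x y + hdist y z"
    unfolding hdist_def by (rule card_Un_le)
  finally show ?thesis .
qed

lemma hc_adj_iff_hdist: "hc_adj x y \<longleftrightarrow> length x = length y \<and> hdist x y = 1"
  unfolding hc_adj_def hdist_def by simp

lemma hdist_Suc_neighbour:
  assumes "length x = length y" "hdist x y = Suc k"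
  obtains x' where "hc_adj x x'" "length x' = length x" "hdist x' y = k"
proof -
  have "{i. i < length x \<and> x ! i \<noteq> y ! i} \<noteq> {}"
    using assms(2) unfolding hdist_def by (metis card.empty nat.distinct(1))
  then obtain i where i: "i < length x" "x ! i \<noteq> y ! i"
    by blast
  define x' where "x' = x[i := y ! i]"
  have "{j. j < length x \<and> x ! j \<noteq> x' ! j} = {i}"
    using i by (auto simp: x'_def nth_list_update)
  then have "hc_adj x x'"
    unfolding hc_adj_def by (simp add: x'_def)
  moreover have "{j. j < length x \<and> x ! j \<noteq> y ! j} = insert i {j. j < length x' \<and> x' ! j \<noteq> y ! j}"
    and "i \<notin> {j. j < length x' \<and> x' ! j \<noteq> y ! j}"
    using i by (auto simp: x'_def nth_list_update)
  then have "hdist x y = Suc (hdist x' y)"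
    unfolding hdist_def by simp
  moreover have "length x' = length x"
    by (simp add: x'_def)
  ultimately show ?thesis
    using assms(2) by (intro that) simp_all
qed

lemma hypercube_aut_bij: "hypercube_aut n \<sigma> \<Longrightarrow> bij_betw \<sigma> (cube n) (cube n)"
  unfolding hypercube_aut_def by blast

lemma hypercube_aut_hc_adj:
  "hypercube_aut n \<sigma> \<Longrightarrow> x \<in> cube n \<Longrightarrow> y \<in> cube n \<Longrightarrow> hc_adj (\<sigma> x) (\<sigma> y) \<longleftrightarrow> hc_adj x y"
  unfolding hypercube_aut_def by blast

lemma hypercube_aut_in_cube: "hypercube_aut n \<sigma> \<Longrightarrow> x \<in> cube n \<Longrightarrow> \<sigma> x \<in> cube n"
  by (rule bij_betw_apply[OF hypercube_aut_bij])

lemma hypercube_aut_preimage: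
  assumes "hypercube_aut n \<sigma>" "y \<in> cube n"
  obtains x where "x \<in> cube n" "\<sigma> x = y"
  using hypercube_aut_bij[OF assms(1)] assms(2) unfolding bij_betw_def by (metis imageE)

lemma hypercube_aut_inv_into:
  assumes "hypercube_aut n \<sigma>"
  shows "hypercube_aut n (inv_into (cube n) \<sigma>)"
proof -
  let ?\<tau> = "inv_into (cube n) \<sigma>"
  have bij: "bij_betw \<sigma> (cube n) (cube n)"
    using assms by (rule hypercube_aut_bij)
  have bij_inv: "bij_betw ?\<tau> (cube n) (cube n)"
    using bij by (rule bij_betw_inv_into)
  have "hc_adj x y \<longleftrightarrow> hc_adj (?\<tau> x) (?\<tau> y)" if "x \<in> cube n" "y \<in> cube n" for x y
  proof -
    have "?\<tau> x \<in> cube n" "?\<tau> y \<in> cube n"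
      using bij_inv that by (simp_all add: bij_betw_apply)
    then have "hc_adj (?\<tau> x) (?\<tau> y) \<longleftrightarrow> hc_adj (\<sigma> (?\<tau> x)) (\<sigma> (?\<tau> y))"
      using hypercube_aut_hc_adj[OF assms] by blast
    then show ?thesis
      using bij that by (simp add: bij_betw_inv_into_right)
  qed
  with bij_inv show ?thesis
    unfolding hypercube_aut_def by blast
qed

lemma hypercube_aut_hdist_le:
  assumes "hypercube_aut n \<sigma>" "x \<in> cube n" "y \<in> cube n"
  shows "hdist (\<sigma> x) (\<sigma> y) \<le> hdist x y"
  using assms(2)
proof (induction "hdist x y" arbitrary: x)
  case 0
  then show ?case
    using assms(3) hdist_eq_0_iff[of x y] by (simp add: cube_def)
next
  case (Suc k)
  have "length x = length y"
    using Suc.prems assms(3) by (simp add: cube_def)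
  then obtain x' where x': "hc_adj x x'" "length x' = length x" "hdist x' y = k"
    using hdist_Suc_neighbour Suc.hyps(2)[symmetric] by blast
  have "x' \<in> cube n"
    using x'(2) Suc.prems by (simp add: cube_def)
  then have "hc_adj (\<sigma> x) (\<sigma> x')" and "hdist (\<sigma> x') (\<sigma> y) \<le> k"
    using hypercube_aut_hc_adj[OF assms(1) Suc.prems] x' Suc.hyps(1)[of x'] by simp_all
  moreover have "\<sigma> x \<in> cube n" "\<sigma> x' \<in> cube n" "\<sigma> y \<in> cube n"
    using hypercube_aut_in_cube[OF assms(1)] Suc.prems \<open>x' \<in> cube n\<close> assms(3) by auto
  ultimately show ?case
    using hdist_triangle[of "\<sigma> x" "\<sigma> x'" "\<sigma> y"] Suc.hyps(2)
    by (simp add: cube_def hc_adj_iff_hdist)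
qed

lemma hypercube_aut_hdist:
  assumes "hypercube_aut n \<sigma>" "x \<in> cube n" "y \<in> cube n"
  shows "hdist (\<sigma> x) (\<sigma> y) = hdist x y"
proof (rule antisym)
  show "hdist (\<sigma> x) (\<sigma> y) \<le> hdist x y"
    using hypercube_aut_hdist_le assms .
  have "bij_betw \<sigma> (cube n) (cube n)"
    using assms(1) by (rule hypercube_aut_bij)
  then have "inv_into (cube n) \<sigma> (\<sigma> x) = x" "inv_into (cube n) \<sigma> (\<sigma> y) = y"
    using assms(2,3) by (auto simp: bij_betw_def)
  moreover have "\<sigma> x \<in> cube n" "\<sigma> y \<in> cube n"
    using hypercube_aut_in_cube[OF assms(1)] assms(2,3) by auto
  ultimately show "hdist x y \<le> hdist (\<sigma> x) (\<sigma> y)"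
    using hypercube_aut_hdist_le[OF hypercube_aut_inv_into[OF assms(1)], of "\<sigma> x" "\<sigma> y"] by simp
qed

section \<open>The Fork function\<close>

definition fork_decoy :: "nat \<Rightarrow> nat \<Rightarrow> bool list" where
  "fork_decoy n r = replicate r False @ replicate (n - r) True"

definition fork_peak :: "nat \<Rightarrow> nat \<Rightarrow> bool list" where
  "fork_peak n r = replicate (n - r) True @ replicate r False"

lemma Fork_eq:
  "Fork n r x = (if x = fork_decoy n r then real n + 1
     else if x = fork_peak n r then real n + 2 else real (ones x))"
  unfolding Fork_def fork_decoy_def fork_peak_def ..

lemma length_fork_decoy: "r \<le> n \<Longrightarrow> length (fork_decoy n r) = n"
  and length_fork_peak: "r \<le> n \<Longrightarrow> length (fork_peak n r) = n"
  by (simp_all add: fork_decoy_def fork_peak_def)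

lemma nth_fork_decoy: "r \<le> n \<Longrightarrow> i < n \<Longrightarrow> fork_decoy n r ! i = (r \<le> i)"
  by (simp add: fork_decoy_def nth_append)

lemma nth_fork_peak: "r \<le> n \<Longrightarrow> i < n \<Longrightarrow> fork_peak n r ! i = (i < n - r)"
  by (simp add: fork_peak_def nth_append)

lemma fork_decoy_ne_peak:
  assumes "0 < r" "r < n"
  shows "fork_decoy n r \<noteq> fork_peak n r"
proof
  assume "fork_decoy n r = fork_peak n r"
  then have "fork_decoy n r ! 0 = fork_peak n r ! 0"
    by simp
  with assms show False
    by (simp add: nth_fork_decoy nth_fork_peak)
qed

lemma ones_add_hdist_ones: "ones y + hdist y (replicate (length y) True) = length y"
proof -
  have "{i. i < length y \<and> y ! i} \<union> {i. i < length y \<and> y ! i \<noteq> replicate (length y) True ! i}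
      = {..<length y}"
    and "{i. i < length y \<and> y ! i} \<inter> {i. i < length y \<and> y ! i \<noteq> replicate (length y) True ! i}
      = {}"
    by auto
  then show ?thesis
    unfolding ones_def length_filter_conv_card hdist_def
    by (simp add: card_Un_disjoint[symmetric])
qed

lemma hdist_fork_decoy_ones: "r \<le> n \<Longrightarrow> hdist (fork_decoy n r) (replicate n True) = r"
proof -
  assume "r \<le> n"
  then have "{i. i < length (fork_decoy n r) \<and> fork_decoy n r ! i \<noteq> replicate n True ! i} = {..<r}"
    by (auto simp: length_fork_decoy nth_fork_decoy)
  then show ?thesis
    unfolding hdist_def by simp
qed

lemma hdist_fork_peak_ones: "r \<le> n \<Longrightarrow> hdist (fork_peak n r) (replicate n True) = r"
proof -
  assume "r \<le> n"
  then have "{i. i < length (fork_peak n r) \<and> fork_peak n r ! i \<noteq> replicate n True ! i} = {n - r..<n}"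
    by (auto simp: length_fork_peak nth_fork_peak)
  then show ?thesis
    unfolding hdist_def using \<open>r \<le> n\<close> by simp
qed

lemma ones_le_length: "ones x \<le> length x"
  unfolding ones_def by simp

lemma Fork_le: "x \<in> cube n \<Longrightarrow> Fork n r x \<le> real n + 2"
  using ones_le_length[of x] by (simp add: Fork_eq cube_def)

lemma Fork_fork_peak: "0 < r \<Longrightarrow> r < n \<Longrightarrow> Fork n r (fork_peak n r) = real n + 2"
  using fork_decoy_ne_peak[of r n] by (auto simp: Fork_eq)

lemma Fork_ge_imp_peak: "x \<in> cube n \<Longrightarrow> real n + 2 \<le> Fork n r x \<Longrightarrow> x = fork_peak n r"
  using ones_le_length[of x] by (simp add: Fork_eq cube_def split: if_splits)

lemma is_opt_Fork_aut_iff: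
  assumes aut: "hypercube_aut n \<sigma>" and r: "0 < r" "r < n"
  shows "is_opt n (\<lambda>x. Fork n r (\<sigma> x)) x \<longleftrightarrow> x \<in> cube n \<and> \<sigma> x = fork_peak n r"
proof
  assume opt: "is_opt n (\<lambda>x. Fork n r (\<sigma> x)) x"
  have "fork_peak n r \<in> cube n"
    using r by (simp add: cube_def length_fork_peak)
  then obtain s where "s \<in> cube n" "\<sigma> s = fork_peak n r"
    by (rule hypercube_aut_preimage[OF aut])
  moreover from this(1) have "Fork n r (\<sigma> s) \<le> Fork n r (\<sigma> x)"
    using opt unfolding is_opt_def by blast
  ultimately have "real n + 2 \<le> Fork n r (\<sigma> x)"
    using Fork_fork_peak[OF r] by simp
  moreover have "x \<in> cube n"
    using opt unfolding is_opt_def by blast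
  ultimately show "x \<in> cube n \<and> \<sigma> x = fork_peak n r"
    using Fork_ge_imp_peak hypercube_aut_in_cube[OF aut] by blast
next
  assume "x \<in> cube n \<and> \<sigma> x = fork_peak n r"
  then show "is_opt n (\<lambda>x. Fork n r (\<sigma> x)) x"
    using Fork_le Fork_fork_peak[OF r] hypercube_aut_in_cube[OF aut] unfolding is_opt_def by auto
qed

section \<open>Deterministic algorithms and the upper bound\<close>

primrec det_history :: "(history \<Rightarrow> bool list) \<Rightarrow> (bool list \<Rightarrow> real) \<Rightarrow> nat \<Rightarrow> history" where
  "det_history query f 0 = []"
| "det_history query f (Suc t) =
     det_history query f t @ [(query (det_history query f t), f (query (det_history query f t)))]"

definition det_query :: "(history \<Rightarrow> bool list) \<Rightarrow> (bool list \<Rightarrow> real) \<Rightarrow> nat \<Rightarrow> bool list" where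
  "det_query query f t = query (det_history query f t)"

lemma run_return_pmf: "run (\<lambda>h. return_pmf (query h)) f t = return_pmf (det_history query f t)"
  by (induction t) (simp_all add: map_return_pmf bind_return_pmf)

lemma length_det_history [simp]: "length (det_history query f t) = t"
  by (induction t) simp_all

lemma nth_det_history:
  "i < t \<Longrightarrow> det_history query f t ! i = (det_query query f i, f (det_query query f i))"
  by (induction t) (auto simp: det_query_def nth_append less_Suc_eq)

lemma expected_opt_time_det_le:
  assumes "j < T" "is_opt n f (det_query query f j)"
  shows "expected_opt_time n (\<lambda>h. return_pmf (query h)) f \<le> of_nat T"
proof -
  let ?p = "\<lambda>t. ennreal (measure_pmf.prob (run (\<lambda>h. return_pmf (query h)) f t)
                {h. \<forall>p\<in>set h. \<not> is_opt n f (fst p)})"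
  have "(det_query query f j, f (det_query query f j)) \<in> set (det_history query f t)" if "T \<le> t" for t
  proof -
    have "j < t"
      using assms(1) that by simp
    then show ?thesis
      using nth_mem[of j "det_history query f t"] nth_det_history[of j t] by simp
  qed
  then have "det_history query f t \<notin> {h. \<forall>p\<in>set h. \<not> is_opt n f (fst p)}" if "T \<le> t" for t
    using that assms(2) by fastforce
  then have "?p t = 0" if "t \<notin> {..<T}" for t
    using that by (simp add: run_return_pmf)
  then have "expected_opt_time n (\<lambda>h. return_pmf (query h)) f = (\<Sum>t<T. ?p t)"
    unfolding expected_opt_time_def by (intro suminf_finite) auto
  also have "\<dots> \<le> (\<Sum>t<T. 1)"
    by (intro sum_mono) simp
  finally show ?thesis
    by simp
qed

definition dist_to_ones :: "nat \<Rightarrow> nat \<Rightarrow> real \<Rightarrow> real" where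
  "dist_to_ones n r v = (if v = real n + 1 then real r else real n - v)"

lemma dist_to_ones_Fork:
  assumes "r \<le> n" "y \<in> cube n" "y \<noteq> fork_peak n r"
  shows "dist_to_ones n r (Fork n r y) = real (hdist y (replicate n True))"
proof (cases "y = fork_decoy n r")
  case True
  then show ?thesis
    using assms(1) by (simp add: Fork_eq dist_to_ones_def hdist_fork_decoy_ones)
next
  case False
  have "ones y + hdist y (replicate n True) = n"
    using ones_add_hdist_ones[of y] assms(2) by (simp add: cube_def)
  then have "real (ones y) \<noteq> real n + 1" "real n - real (ones y) = real (hdist y (replicate n True))"
    by linarith+
  then show ?thesis
    using False assms(3) by (simp add: Fork_eq dist_to_ones_def)
qed

lemma dist_to_ones_Fork_aut:
  assumes aut: "hypercube_aut n \<sigma>" and "r \<le> n" "x \<in> cube n" "\<sigma> x \<noteq> fork_peak n r"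
    and z: "z \<in> cube n" "\<sigma> z = replicate n True"
  shows "dist_to_ones n r (Fork n r (\<sigma> x)) = real (hdist x z)"
  using dist_to_ones_Fork[of r n "\<sigma> x"] hypercube_aut_hdist[OF aut \<open>x \<in> cube n\<close> z(1)]
    hypercube_aut_in_cube[OF aut] assms by simp

definition unit_vec :: "nat \<Rightarrow> nat \<Rightarrow> bool list" where
  "unit_vec n i = (replicate n False)[i := True]"

lemma hdist_unit_vec_less_iff:
  assumes "length z = n" "i < n"
  shows "hdist (unit_vec n i) z < hdist (replicate n False) z \<longleftrightarrow> z ! i"
proof -
  let ?A = "{j. j < n \<and> z ! j}"
  have zero: "{j. j < length (replicate n False) \<and> replicate n False ! j \<noteq> z ! j} = ?A"
    by auto
  show ?thesis
  proof (cases "z ! i")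
    case True
    then have "{j. j < length (unit_vec n i) \<and> unit_vec n i ! j \<noteq> z ! j} = ?A - {i}"
      using assms by (auto simp: unit_vec_def nth_list_update)
    moreover have "i \<in> ?A"
      using True assms by simp
    ultimately show ?thesis
      unfolding hdist_def zero using True card_Diff1_less[of ?A i] by simp
  next
    case False
    then have "{j. j < length (unit_vec n i) \<and> unit_vec n i ! j \<noteq> z ! j} = insert i ?A"
      using assms by (auto simp: unit_vec_def nth_list_update)
    moreover have "i \<notin> ?A"
      using False by simp
    ultimately show ?thesis
      unfolding hdist_def zero using False by simp
  qed
qed

definition sphere_list :: "nat \<Rightarrow> bool list \<Rightarrow> nat \<Rightarrow> bool list list" where
  "sphere_list n z d = filter (\<lambda>y. hdist y z = d) (List.n_lists n [True, False])"

lemma set_sphere_list: "set (sphere_list n z d) = {y \<in> cube n. hdist y z = d}"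
  by (auto simp: sphere_list_def set_n_lists cube_def)

lemma card_sphere_le:
  assumes "length z = n"
  shows "card {y \<in> cube n. hdist y z = d} \<le> n choose d"
proof -
  let ?diff = "\<lambda>y. {i. i < n \<and> y ! i \<noteq> z ! i}"
  have "inj_on ?diff {y \<in> cube n. hdist y z = d}"
  proof (rule inj_onI)
    fix x y
    assume "x \<in> {y \<in> cube n. hdist y z = d}" "y \<in> {y \<in> cube n. hdist y z = d}" "?diff x = ?diff y"
    then have "length x = length y" "\<forall>i < length x. x ! i = y ! i"
      by (auto simp: cube_def set_eq_iff)
    then show "x = y"
      by (simp add: list_eq_iff_nth_eq)
  qed
  moreover have "?diff ` {y \<in> cube n. hdist y z = d} \<subseteq> {S. S \<subseteq> {..<n} \<and> card S = d}"
    by (auto simp: hdist_def cube_def)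
  ultimately have "card {y \<in> cube n. hdist y z = d} \<le> card {S. S \<subseteq> {..<n} \<and> card S = d}"
    by (intro card_inj_on_le) auto
  then show ?thesis
    by (simp add: n_subsets)
qed

lemma length_sphere_list_le: "length z = n \<Longrightarrow> length (sphere_list n z d) \<le> n choose d"
proof -
  assume "length z = n"
  have "distinct (sphere_list n z d)"
    unfolding sphere_list_def by (intro distinct_filter distinct_n_lists) simp
  then have "length (sphere_list n z d) = card {y \<in> cube n. hdist y z = d}"
    by (simp flip: set_sphere_list add: distinct_card)
  with card_sphere_le[OF \<open>length z = n\<close>] show ?thesis
    by simp
qed

definition decode_ones :: "nat \<Rightarrow> nat \<Rightarrow> history \<Rightarrow> bool list" where
  "decode_ones n r h =
     map (\<lambda>i. dist_to_ones n r (snd (h ! Suc i)) < dist_to_ones n r (snd (h ! 0))) [0..<n]"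

definition fork_solver :: "nat \<Rightarrow> nat \<Rightarrow> history \<Rightarrow> bool list" where
  "fork_solver n r h =
     (if h = [] then replicate n False
      else if length h \<le> n then unit_vec n (length h - 1)
      else let L = sphere_list n (decode_ones n r h) r; m = length h - Suc n in
        if m < length L then L ! m else replicate n False)"

lemma fork_solver_in_cube: "fork_solver n r h \<in> cube n"
proof -
  have "L ! m \<in> cube n" if "L = sphere_list n z r" "m < length L" for L m z
    using that nth_mem[of m L] by (simp add: set_sphere_list)
  then show ?thesis
    by (simp add: fork_solver_def Let_def cube_def unit_vec_def)
qed

lemma decode_ones_det_history:
  fixes n r :: nat and \<sigma> :: "bool list \<Rightarrow> bool list"
  defines "f \<equiv> \<lambda>x. Fork n r (\<sigma> x)"
  assumes aut: "hypercube_aut n \<sigma>" and "r \<le> n"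
    and z: "z \<in> cube n" "\<sigma> z = replicate n True"
    and miss: "\<And>j. j \<le> n \<Longrightarrow> \<sigma> (det_query (fork_solver n r) f j) \<noteq> fork_peak n r"
    and "n < k"
  shows "decode_ones n r (det_history (fork_solver n r) f k) = z"
proof (rule nth_equalityI)
  show "length (decode_ones n r (det_history (fork_solver n r) f k)) = length z"
    using z by (simp add: decode_ones_def cube_def)
next
  fix i
  assume "i < length (decode_ones n r (det_history (fork_solver n r) f k))"
  then have i: "i < n"
    by (simp add: decode_ones_def)
  let ?Q = "det_query (fork_solver n r) f"
  have dist: "dist_to_ones n r (f (?Q j)) = real (hdist (?Q j) z)" if "j \<le> n" for j
  proof -
    have "?Q j \<in> cube n"
      by (simp add: det_query_def fork_solver_in_cube)
    then show ?thesis
      using dist_to_ones_Fork_aut[OF aut \<open>r \<le> n\<close> _ miss[OF that] z] by (simp add: f_def)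
  qed
  have "?Q 0 = replicate n False" "?Q (Suc i) = unit_vec n i"
    using i by (simp_all add: det_query_def fork_solver_def)
  then have "dist_to_ones n r (f (?Q (Suc i))) < dist_to_ones n r (f (?Q 0))
      \<longleftrightarrow> hdist (unit_vec n i) z < hdist (replicate n False) z"
    using dist[of "Suc i"] dist[of 0] i by simp
  also have "\<dots> \<longleftrightarrow> z ! i"
    using hdist_unit_vec_less_iff i z by (simp add: cube_def)
  finally show "decode_ones n r (det_history (fork_solver n r) f k) ! i = z ! i"
    using i \<open>n < k\<close> by (simp add: decode_ones_def nth_det_history)
qed

lemma fork_solver_finds_peak:
  fixes n r :: nat and \<sigma> :: "bool list \<Rightarrow> bool list"
  defines "f \<equiv> \<lambda>x. Fork n r (\<sigma> x)"
  assumes aut: "hypercube_aut n \<sigma>" and r: "0 < r" "r < n"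
  shows "\<exists>j < n + 1 + (n choose r). is_opt n f (det_query (fork_solver n r) f j)"
proof -
  let ?Q = "det_query (fork_solver n r) f"
  have "replicate n True \<in> cube n" "fork_peak n r \<in> cube n"
    using r by (simp_all add: cube_def length_fork_peak)
  then obtain z s where z: "z \<in> cube n" "\<sigma> z = replicate n True"
    and s: "s \<in> cube n" "\<sigma> s = fork_peak n r"
    using hypercube_aut_preimage[OF aut] by metis
  have opt_iff: "is_opt n f x \<longleftrightarrow> x \<in> cube n \<and> \<sigma> x = fork_peak n r" for x
    unfolding f_def using is_opt_Fork_aut_iff[OF aut r] .
  show ?thesis
  proof (cases "\<exists>j\<le>n. \<sigma> (?Q j) = fork_peak n r")
    case True
    then obtain j where "j \<le> n" "\<sigma> (?Q j) = fork_peak n r"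
      by blast
    moreover have "?Q j \<in> cube n"
      by (simp add: det_query_def fork_solver_in_cube)
    ultimately show ?thesis
      using opt_iff by (intro exI[of _ j]) auto
  next
    case False
    let ?L = "sphere_list n z r"
    have "hdist s z = r"
      using hypercube_aut_hdist[OF aut s(1) z(1)] s(2) z(2) hdist_fork_peak_ones r by simp
    then have "s \<in> set ?L"
      using s(1) by (simp add: set_sphere_list)
    then obtain m where m: "m < length ?L" "?L ! m = s"
      by (auto simp: in_set_conv_nth)
    have miss: "\<sigma> (?Q j) \<noteq> fork_peak n r" if "j \<le> n" for j
      using False that by blast
    have "decode_ones n r (det_history (fork_solver n r) f (n + 1 + m)) = z"
      using decode_ones_det_history[OF aut less_imp_le[OF r(2)] z miss[unfolded f_def], of "n + 1 + m"]
      unfolding f_def by simp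
    then have "?Q (n + 1 + m) = s"
      using m by (simp add: det_query_def fork_solver_def Let_def)
    moreover have "length ?L \<le> n choose r"
      using z(1) by (simp add: length_sphere_list_le cube_def)
    ultimately show ?thesis
      using m(1) s opt_iff by (intro exI[of _ "n + 1 + m"]) simp
  qed
qed

lemma bb_complexity_Fork_le:
  assumes "0 < r" "r < n"
  shows "bb_complexity n (Fork_class n r) \<le> of_nat (n + 1 + (n choose r))"
proof -
  have "valid_alg n (\<lambda>h. return_pmf (fork_solver n r h))"
    by (simp add: valid_alg_def fork_solver_in_cube)
  then have "bb_complexity n (Fork_class n r)
      \<le> (SUP f\<in>Fork_class n r. expected_opt_time n (\<lambda>h. return_pmf (fork_solver n r h)) f)"
    unfolding bb_complexity_def by (intro INF_lower) simp
  also have "\<dots> \<le> of_nat (n + 1 + (n choose r))"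
  proof (rule SUP_least)
    fix f
    assume "f \<in> Fork_class n r"
    then obtain \<sigma> where "hypercube_aut n \<sigma>" "f = (\<lambda>x. Fork n r (\<sigma> x))"
      by (auto simp: Fork_class_def)
    then obtain j where "j < n + 1 + (n choose r)" "is_opt n f (det_query (fork_solver n r) f j)"
      using fork_solver_finds_peak[OF _ assms] by blast
    then show "expected_opt_time n (\<lambda>h. return_pmf (fork_solver n r h)) f \<le> of_nat (n + 1 + (n choose r))"
      by (rule expected_opt_time_det_le)
  qed
  finally show ?thesis .
qed

section \<open>A needle-in-a-haystack lower bound\<close>

lemma pmf_run_Suc_Nil: "pmf (run A f (Suc t)) [] = 0"
  by (auto simp: pmf_eq_0_set_pmf)

lemma pmf_run_Suc_snoc:
  "pmf (run A f (Suc t)) (h @ [(x, v)]) = pmf (run A f t) h * (if v = f x then pmf (A h) x else 0)"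
proof -
  have "pmf (map_pmf (\<lambda>y. h' @ [(y, f y)]) (A h')) (h @ [(x, v)])
      = (if v = f x then pmf (A h) x else 0) * indicator {h} h'" for h'
  proof -
    have "(\<lambda>y. h' @ [(y, f y)]) -` {h @ [(x, v)]} = (if h' = h \<and> v = f x then {x} else {})"
      by auto
    then show ?thesis
      by (simp add: pmf_map measure_pmf_single)
  qed
  then show ?thesis
    by (simp add: pmf_bind measure_pmf_single mult.commute)
qed

lemma length_run: "h \<in> set_pmf (run A f t) \<Longrightarrow> length h = t"
  by (induction t arbitrary: h) auto

lemma pmf_run_eq_if_avoids:
  assumes A: "valid_alg n A" and agree: "\<And>x. x \<in> cube n \<Longrightarrow> x \<noteq> q \<Longrightarrow> f x = g x"
  shows "q \<notin> fst ` set h \<Longrightarrow> pmf (run A f t) h = pmf (run A g t) h"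
proof (induction t arbitrary: h)
  case 0
  then show ?case
    by simp
next
  case (Suc t)
  show ?case
  proof (cases h rule: rev_cases)
    case Nil
    then show ?thesis
      by (simp only: pmf_run_Suc_Nil)
  next
    case (snoc h' p)
    obtain x v where p: "p = (x, v)"
      by fastforce
    have IH: "pmf (run A f t) h' = pmf (run A g t) h'" and "x \<noteq> q"
      using Suc snoc p by auto
    show ?thesis
    proof (cases "x \<in> cube n")
      case True
      then show ?thesis
        unfolding snoc p pmf_run_Suc_snoc using IH agree[OF True \<open>x \<noteq> q\<close>] by simp
    next
      case False
      then have "pmf (A h') x = 0"
        using A unfolding valid_alg_def by (meson pmf_eq_0_set_pmf subsetD)
      then show ?thesis
        unfolding snoc p pmf_run_Suc_snoc by simp
    qed
  qed
qed

lemma prob_run_eq_if_avoids: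
  assumes "valid_alg n A" "\<And>x. x \<in> cube n \<Longrightarrow> x \<noteq> q \<Longrightarrow> f x = g x"
    and "E \<subseteq> {h. q \<notin> fst ` set h}"
  shows "measure_pmf.prob (run A f t) E = measure_pmf.prob (run A g t) E"
  unfolding measure_pmf_conv_infsetsum
  using pmf_run_eq_if_avoids[OF assms(1,2)] assms(3) by (intro infsetsum_cong) auto

lemma card_avoided_ge:
  assumes "finite I" "inj_on q I"
  shows "card I \<le> card {i \<in> I. q i \<notin> fst ` set h} + length h"
proof -
  have "card {i \<in> I. q i \<in> fst ` set h} \<le> card (fst ` set h)"
    using assms by (intro card_inj_on_le[of q]) (auto simp: inj_on_def)
  also have "\<dots> \<le> length h"
    using card_image_le card_length le_trans by blast
  finally have "card {i \<in> I. q i \<in> fst ` set h} \<le> length h" .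
  moreover have "card I = card {i \<in> I. q i \<notin> fst ` set h} + card {i \<in> I. q i \<in> fst ` set h}"
    using assms(1) by (subst card_Un_disjoint[symmetric]) (auto intro: arg_cong[where f = card])
  ultimately show ?thesis
    by linarith
qed

lemma card_le_sum_prob_avoid:
  assumes "finite I" "inj_on q I"
  shows "real (card I) - real t \<le> (\<Sum>i\<in>I. measure_pmf.prob (run A g t) {h. q i \<notin> fst ` set h})"
proof -
  let ?M = "measure_pmf (run A g t)"
  let ?E = "\<lambda>i. {h. q i \<notin> fst ` set h}"
  have "real (card I) - real t \<le> (\<Sum>i\<in>I. indicator (?E i) h)" if "length h = t" for h :: history
  proof -
    have "(\<Sum>i\<in>I. indicator (?E i) h :: real) = real (card {i \<in> I. q i \<notin> fst ` set h})"
      using assms(1) by (simp add: indicator_def sum.If_cases Int_def conj_commute)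
    then show ?thesis
      using card_avoided_ge[OF assms, of h] that by linarith
  qed
  moreover have int: "integrable ?M (indicator (?E i) :: history \<Rightarrow> real)" for i
    by (rule measure_pmf.integrable_const_bound[where B = 1]) auto
  ultimately have "measure_pmf.expectation (run A g t) (\<lambda>_. real (card I) - real t)
      \<le> measure_pmf.expectation (run A g t) (\<lambda>h. \<Sum>i\<in>I. indicator (?E i) h)"
    by (intro integral_mono_AE) (auto simp: AE_measure_pmf_iff length_run)
  also have "\<dots> = (\<Sum>i\<in>I. measure_pmf.prob (run A g t) (?E i))"
    using int by (subst Bochner_Integration.integral_sum) auto
  finally show ?thesis
    by simp
qed

lemma partial_sum_le_expected_opt_time:
  "ennreal (\<Sum>t<T. measure_pmf.prob (run A f t) {h. \<forall>p\<in>set h. \<not> is_opt n f (fst p)})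
    \<le> expected_opt_time n A f"
proof -
  have "ennreal (\<Sum>t<T. measure_pmf.prob (run A f t) {h. \<forall>p\<in>set h. \<not> is_opt n f (fst p)})
      = (\<Sum>t<T. ennreal (measure_pmf.prob (run A f t) {h. \<forall>p\<in>set h. \<not> is_opt n f (fst p)}))"
    by (rule sum_ennreal[symmetric]) simp
  also have "\<dots> \<le> expected_opt_time n A f"
    unfolding expected_opt_time_def by (rule sum_le_suminf) auto
  finally show ?thesis .
qed

lemma sum_lessThan_diff_ge: "real m * real m / 2 \<le> (\<Sum>t<m. real m - real t)"
proof -
  have eq: "(\<Sum>t<k. real m - real t) = real k * real m - real k * (real k - 1) / 2" for k
    by (induction k) (auto simp: field_simps)
  show ?thesis
    unfolding eq by (simp add: field_simps)
qed

lemma sum_expected_opt_time_ge: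
  fixes q :: "'i \<Rightarrow> bool list" and f :: "'i \<Rightarrow> bool list \<Rightarrow> real"
  assumes A: "valid_alg n A" and I: "finite I" "inj_on q I"
    and agree: "\<And>i x. i \<in> I \<Longrightarrow> x \<in> cube n \<Longrightarrow> x \<noteq> q i \<Longrightarrow> f i x = g x"
    and opt: "\<And>i x. i \<in> I \<Longrightarrow> is_opt n (f i) x \<Longrightarrow> x = q i"
  shows "ennreal (real (card I) * real (card I) / 2) \<le> (\<Sum>i\<in>I. expected_opt_time n A (f i))"
proof -
  define P where "P i t = measure_pmf.prob (run A (f i) t) {h. \<forall>p\<in>set h. \<not> is_opt n (f i) (fst p)}"
    for i t
  have step: "real (card I) - real t \<le> (\<Sum>i\<in>I. P i t)" for t
  proof -
    have "real (card I) - real t \<le> (\<Sum>i\<in>I. measure_pmf.prob (run A g t) {h. q i \<notin> fst ` set h})"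
      by (rule card_le_sum_prob_avoid[OF I])
    also have "\<dots> = (\<Sum>i\<in>I. measure_pmf.prob (run A (f i) t) {h. q i \<notin> fst ` set h})"
      using prob_run_eq_if_avoids[OF A agree] by (intro sum.cong) auto
    also have "\<dots> \<le> (\<Sum>i\<in>I. P i t)"
      unfolding P_def using opt by (intro sum_mono measure_pmf.finite_measure_mono) force+
    finally show ?thesis .
  qed
  have "real (card I) * real (card I) / 2 \<le> (\<Sum>t<card I. real (card I) - real t)"
    by (rule sum_lessThan_diff_ge)
  also have "\<dots> \<le> (\<Sum>t<card I. \<Sum>i\<in>I. P i t)"
    by (intro sum_mono step)
  also have "\<dots> = (\<Sum>i\<in>I. \<Sum>t<card I. P i t)"
    by (rule sum.swap)
  finally have "ennreal (real (card I) * real (card I) / 2) \<le> ennreal (\<Sum>i\<in>I. \<Sum>t<card I. P i t)"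
    by (rule ennreal_leI)
  also have "\<dots> = (\<Sum>i\<in>I. ennreal (\<Sum>t<card I. P i t))"
    by (rule sum_ennreal[symmetric]) (simp add: P_def sum_nonneg)
  also have "\<dots> \<le> (\<Sum>i\<in>I. expected_opt_time n A (f i))"
    unfolding P_def by (intro sum_mono partial_sum_le_expected_opt_time)
  finally show ?thesis .
qed

lemma needle_lower_bound:
  fixes q :: "'i \<Rightarrow> bool list" and f :: "'i \<Rightarrow> bool list \<Rightarrow> real"
  assumes "valid_alg n A" "finite I" "inj_on q I"
    and "\<And>i x. i \<in> I \<Longrightarrow> x \<in> cube n \<Longrightarrow> x \<noteq> q i \<Longrightarrow> f i x = g x"
    and "\<And>i x. i \<in> I \<Longrightarrow> is_opt n (f i) x \<Longrightarrow> x = q i"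
  shows "ennreal (real (card I) / 2) \<le> (SUP i\<in>I. expected_opt_time n A (f i))"
proof (cases "I = {}")
  case False
  let ?M = "of_nat (card I) :: ennreal"
  have "?M * ennreal (real (card I) / 2) = ennreal (real (card I) * real (card I) / 2)"
    by (metis ennreal_mult ennreal_of_nat_eq_real_of_nat of_nat_0_le_iff divide_nonneg_nonneg
        zero_le_numeral times_divide_eq_right)
  also have "\<dots> \<le> (\<Sum>i\<in>I. expected_opt_time n A (f i))"
    by (rule sum_expected_opt_time_ge[OF assms])
  also have "\<dots> \<le> (\<Sum>i\<in>I. SUP j\<in>I. expected_opt_time n A (f j))"
    by (intro sum_mono SUP_upper)
  also have "\<dots> = ?M * (SUP i\<in>I. expected_opt_time n A (f i))"
    by simp
  finally show ?thesis
    using False assms(2) by (simp add: ennreal_mult_le_mult_iff)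
qed simp

section \<open>Coordinate permutations and the lower bound for Fork\<close>

lemma permutes_onto:
  assumes "finite U" "S \<subseteq> U" "T \<subseteq> U" "card T = card S"
  obtains \<pi> where "\<pi> permutes U" "\<pi> ` T = S"
proof -
  have fin: "finite S" "finite T" "finite (U - T)" "finite (U - S)"
    using assms finite_subset by auto
  obtain b where b: "bij_betw b T S"
    using finite_same_card_bij[OF fin(2,1) assms(4)] by blast
  have "card (U - T) = card (U - S)"
    using assms fin by (simp add: card_Diff_subset)
  then obtain c where c: "bij_betw c (U - T) (U - S)"
    using finite_same_card_bij[OF fin(3,4)] by blast
  have "bij_betw (\<lambda>x. if x \<in> T then b x else c x) (T \<union> (U - T)) (S \<union> (U - S))"
    by (rule bij_betw_disjoint_Un[OF b c]) auto
  then have "bij_betw (\<lambda>x. if x \<in> T then b x else c x) U U"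
    using assms(2,3) by (simp add: Un_absorb1)
  then have "(\<lambda>x. if x \<in> U then if x \<in> T then b x else c x else x) permutes U"
    unfolding permutes_altdef by (auto cong: bij_betw_cong)
  moreover have "(\<lambda>x. if x \<in> U then if x \<in> T then b x else c x else x) ` T = S"
    using b assms(3) by (auto simp: bij_betw_def)
  ultimately show ?thesis
    using that by blast
qed

lemma length_filter_mset_eq: "mset xs = mset ys \<Longrightarrow> length (filter P xs) = length (filter P ys)"
  by (metis mset_filter size_mset)

lemma hdist_permute_list:
  assumes "\<pi> permutes {..<length x}" "length y = length x"
  shows "hdist (permute_list \<pi> x) (permute_list \<pi> y) = hdist x y"
proof -
  have "zip (permute_list \<pi> x) (permute_list \<pi> y) = permute_list \<pi> (zip x y)"
    using permute_list_zip[OF assms(1) refl assms(2)[symmetric]] by simp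
  then have "mset (zip (permute_list \<pi> x) (permute_list \<pi> y)) = mset (zip x y)"
    using assms by simp
  then have "length (filter (\<lambda>(a, b). a \<noteq> b) (zip (permute_list \<pi> x) (permute_list \<pi> y)))
      = length (filter (\<lambda>(a, b). a \<noteq> b) (zip x y))"
    by (rule length_filter_mset_eq)
  then show ?thesis
    using assms(2) by (simp add: hdist_conv_zip)
qed

lemma ones_permute_list:
  assumes "\<pi> permutes {..<length x}"
  shows "ones (permute_list \<pi> x) = ones x"
  unfolding ones_def by (rule length_filter_mset_eq) (simp add: assms)

lemma hypercube_aut_permute_list:
  assumes "\<pi> permutes {..<n}"
  shows "hypercube_aut n (permute_list \<pi>)"
proof -
  have inv: "\<pi> \<circ> inv \<pi> = id" "inv \<pi> \<circ> \<pi> = id" "inv \<pi> permutes {..<n}"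
    using assms by (simp_all add: permutes_inv permutes_inv_o)
  have "bij_betw (permute_list \<pi>) (cube n) (cube n)"
  proof (rule bij_betwI[where g = "permute_list (inv \<pi>)"])
    show "permute_list \<pi> \<in> cube n \<rightarrow> cube n" "permute_list (inv \<pi>) \<in> cube n \<rightarrow> cube n"
      by (auto simp: cube_def)
    show "permute_list (inv \<pi>) (permute_list \<pi> x) = x" if "x \<in> cube n" for x
      using that assms inv by (simp add: cube_def permute_list_compose[symmetric])
    show "permute_list \<pi> (permute_list (inv \<pi>) y) = y" if "y \<in> cube n" for y
      using that assms inv by (simp add: cube_def permute_list_compose[symmetric])
  qed
  moreover have "hc_adj x y \<longleftrightarrow> hc_adj (permute_list \<pi> x) (permute_list \<pi> y)"
    if "x \<in> cube n" "y \<in> cube n" for x y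
    using that assms by (simp add: cube_def hc_adj_iff_hdist hdist_permute_list)
  ultimately show ?thesis
    unfolding hypercube_aut_def by blast
qed

definition zeros_on :: "nat \<Rightarrow> nat set \<Rightarrow> bool list" where
  "zeros_on n S = map (\<lambda>i. i \<notin> S) [0..<n]"

lemma zeros_on_in_cube: "zeros_on n S \<in> cube n"
  by (simp add: zeros_on_def cube_def)

lemma inj_on_zeros_on: "inj_on (zeros_on n) (Pow {..<n})"
proof (rule inj_onI)
  fix S T
  assume "S \<in> Pow {..<n}" "T \<in> Pow {..<n}" "zeros_on n S = zeros_on n T"
  moreover have "i \<in> S \<longleftrightarrow> i \<in> T" if "i < n" "zeros_on n S = zeros_on n T" for i
    using arg_cong[OF that(2), of "\<lambda>l. l ! i"] that(1) by (simp add: zeros_on_def)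
  ultimately show "S = T"
    by blast
qed

lemma permute_list_fixing_decoy:
  assumes r: "0 < r" "2 * r \<le> n" and S: "S \<subseteq> {r..<n}" "card S = r"
  obtains \<pi> where "\<pi> permutes {..<n}" "permute_list \<pi> (fork_decoy n r) = fork_decoy n r"
    "permute_list \<pi> (zeros_on n S) = fork_peak n r"
proof -
  \<comment> \<open>Permuting only the last n - r coordinates fixes the decoy; mapping the last r of them
    onto S sends the point that is 0 exactly on S to the peak.\<close>
  obtain \<pi> where \<pi>: "\<pi> permutes {r..<n}" "\<pi> ` {n - r..<n} = S"
    by (rule permutes_onto[of "{r..<n}" S "{n - r..<n}"]) (use r S in auto)
  have \<pi>n: "\<pi> permutes {..<n}"
    by (rule permutes_subset[OF \<pi>(1)]) auto
  have nth_\<pi>: "permute_list \<pi> x ! i = x ! \<pi> i" if "length x = n" "i < n" for x i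
    using that \<pi>n by (simp add: permute_list_nth)
  have "r \<le> \<pi> i \<longleftrightarrow> r \<le> i" if "i < n" for i
    using \<pi>(1) permutes_in_image[OF \<pi>(1)] permutes_not_in[OF \<pi>(1)] that
    by (cases "i \<in> {r..<n}") auto
  then have "permute_list \<pi> (fork_decoy n r) = fork_decoy n r"
    using r nth_\<pi>[of "fork_decoy n r"] permutes_in_image[OF \<pi>n]
    by (intro nth_equalityI) (auto simp: length_fork_decoy nth_fork_decoy)
  moreover have "\<pi> i \<in> S \<longleftrightarrow> n - r \<le> i" if "i < n" for i
    using \<pi> that permutes_inj[OF \<pi>(1)] by (auto simp: inj_eq image_iff)
  then have "permute_list \<pi> (zeros_on n S) = fork_peak n r"
    using r nth_\<pi>[of "zeros_on n S"] permutes_in_image[OF \<pi>n]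
    by (intro nth_equalityI) (auto simp: length_fork_peak nth_fork_peak zeros_on_def)
  ultimately show ?thesis
    using that \<pi>n by blast
qed

lemma Fork_class_hides_peak_at:
  assumes r: "0 < r" "2 * r \<le> n" and S: "S \<subseteq> {r..<n}" "card S = r"
  obtains f where "f \<in> Fork_class n r"
    "\<And>x. x \<in> cube n \<Longrightarrow> x \<noteq> zeros_on n S \<Longrightarrow>
       f x = (if x = fork_decoy n r then real n + 1 else real (ones x))"
    "\<And>x. is_opt n f x \<Longrightarrow> x = zeros_on n S"
proof -
  obtain \<pi> where \<pi>n: "\<pi> permutes {..<n}" and decoy: "permute_list \<pi> (fork_decoy n r) = fork_decoy n r"
    and peak: "permute_list \<pi> (zeros_on n S) = fork_peak n r"
    by (rule permute_list_fixing_decoy[OF r S])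
  let ?\<sigma> = "permute_list \<pi>"
  have aut: "hypercube_aut n ?\<sigma>"
    using hypercube_aut_permute_list[OF \<pi>n] .
  have inj: "inj_on ?\<sigma> (cube n)"
    using hypercube_aut_bij[OF aut] by (rule bij_betw_imp_inj_on)
  show ?thesis
  proof (rule that)
    show "(\<lambda>x. Fork n r (?\<sigma> x)) \<in> Fork_class n r"
      using aut unfolding Fork_class_def by blast
  next
    fix x
    assume x: "x \<in> cube n" "x \<noteq> zeros_on n S"
    have "fork_decoy n r \<in> cube n"
      using r by (simp add: cube_def length_fork_decoy)
    then have "?\<sigma> x \<noteq> fork_peak n r" "?\<sigma> x = fork_decoy n r \<longleftrightarrow> x = fork_decoy n r"
      using inj x decoy peak zeros_on_in_cube by (metis inj_on_eq_iff)+
    then show "Fork n r (?\<sigma> x) = (if x = fork_decoy n r then real n + 1 else real (ones x))"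
      using x ones_permute_list[of \<pi> x] \<pi>n by (simp add: Fork_eq cube_def)
  next
    fix x
    assume "is_opt n (\<lambda>x. Fork n r (?\<sigma> x)) x"
    moreover have "r < n"
      using r by simp
    ultimately have "x \<in> cube n" "?\<sigma> x = ?\<sigma> (zeros_on n S)"
      using is_opt_Fork_aut_iff[OF aut r(1)] peak by simp_all
    then show "x = zeros_on n S"
      using inj zeros_on_in_cube by (metis inj_on_eq_iff)
  qed
qed

lemma bb_complexity_Fork_ge:
  assumes r: "0 < r" "2 * r \<le> n"
  shows "ennreal (real ((n - r) choose r) / 2) \<le> bb_complexity n (Fork_class n r)"
proof -
  define I where "I = {S. S \<subseteq> {r..<n} \<and> card S = r}"
  define base where "base x = (if x = fork_decoy n r then real n + 1 else real (ones x))" for x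
  have "\<forall>S\<in>I. \<exists>f. f \<in> Fork_class n r \<and> (\<forall>x\<in>cube n. x \<noteq> zeros_on n S \<longrightarrow> f x = base x)
      \<and> (\<forall>x. is_opt n f x \<longrightarrow> x = zeros_on n S)"
  proof
    fix S
    assume "S \<in> I"
    then have "S \<subseteq> {r..<n}" "card S = r"
      by (simp_all add: I_def)
    then obtain f where "f \<in> Fork_class n r" "\<And>x. x \<in> cube n \<Longrightarrow> x \<noteq> zeros_on n S \<Longrightarrow> f x = base x"
      "\<And>x. is_opt n f x \<Longrightarrow> x = zeros_on n S"
      using Fork_class_hides_peak_at[OF r] unfolding base_def by blast
    then show "\<exists>f. f \<in> Fork_class n r \<and> (\<forall>x\<in>cube n. x \<noteq> zeros_on n S \<longrightarrow> f x = base x)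
        \<and> (\<forall>x. is_opt n f x \<longrightarrow> x = zeros_on n S)"
      by blast
  qed
  then obtain f where f: "\<forall>S\<in>I. f S \<in> Fork_class n r \<and> (\<forall>x\<in>cube n. x \<noteq> zeros_on n S \<longrightarrow> f S x = base x)
      \<and> (\<forall>x. is_opt n (f S) x \<longrightarrow> x = zeros_on n S)"
    by (rule bchoice[THEN exE])
  have f_in: "f S \<in> Fork_class n r" if "S \<in> I" for S
    using f that by blast
  have agree: "f S x = base x" if "S \<in> I" "x \<in> cube n" "x \<noteq> zeros_on n S" for S x
    using f that by blast
  have opt: "x = zeros_on n S" if "S \<in> I" "is_opt n (f S) x" for S x
    using f that by blast
  have fin: "finite I" and card: "card I = (n - r) choose r"
    unfolding I_def by (simp_all add: n_subsets)
  have inj: "inj_on (zeros_on n) I"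
    by (rule inj_on_subset[OF inj_on_zeros_on]) (auto simp: I_def)
  have "ennreal (real (card I) / 2) \<le> (SUP g\<in>Fork_class n r. expected_opt_time n A g)"
    if "valid_alg n A" for A
  proof -
    have "ennreal (real (card I) / 2) \<le> (SUP S\<in>I. expected_opt_time n A (f S))"
      by (rule needle_lower_bound[OF that fin inj agree opt])
    also have "\<dots> \<le> (SUP g\<in>Fork_class n r. expected_opt_time n A g)"
      using f_in by (intro SUP_least SUP_upper)
    finally show ?thesis .
  qed
  then show ?thesis
    unfolding bb_complexity_def card by (intro INF_greatest) simp
qed

lemma bb_complexity_Fork_ge_power:
  assumes "0 < r" "2 * r \<le> n"
  shows "ennreal ((real n / (2 * real r)) ^ r / 2) \<le> bb_complexity n (Fork_class n r)"
proof -
  have "real n / (2 * real r) \<le> real (n - r) / real r"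
    using assms by (simp add: field_simps of_nat_diff)
  then have "(real n / (2 * real r)) ^ r \<le> (real (n - r) / real r) ^ r"
    by (intro power_mono) auto
  also have "\<dots> \<le> real ((n - r) choose r)"
    using binomial_ge_n_over_k_pow_k[of r "n - r", where 'a = real] assms by simp
  finally have "ennreal ((real n / (2 * real r)) ^ r / 2) \<le> ennreal (real ((n - r) choose r) / 2)"
    by (intro ennreal_leI) simp
  also have "\<dots> \<le> bb_complexity n (Fork_class n r)"
    using bb_complexity_Fork_ge[OF assms] .
  finally show ?thesis .
qed

lemma bb_complexity_Fork_le_power:
  assumes "0 < r" "r < n"
  shows "bb_complexity n (Fork_class n r) \<le> ennreal (3 * real n ^ r)"
proof -
  have "n choose r \<le> n ^ r" "n \<le> n ^ r" "1 \<le> n ^ r"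
    using assms binomial_le_pow[of r n] by (simp_all add: self_le_power)
  then have "real (n + 1 + (n choose r)) \<le> 3 * real n ^ r"
    by (simp flip: of_nat_power)
  have "bb_complexity n (Fork_class n r) \<le> of_nat (n + 1 + (n choose r))"
    using bb_complexity_Fork_le[OF assms] .
  also have "\<dots> = ennreal (real (n + 1 + (n choose r)))"
    by (rule ennreal_of_nat_eq_real_of_nat)
  also have "\<dots> \<le> ennreal (3 * real n ^ r)"
    using \<open>real (n + 1 + (n choose r)) \<le> 3 * real n ^ r\<close> by (rule ennreal_leI)
  finally show ?thesis .
qed

theorem proposition1:
  fixes r :: nat
  assumes "r \<ge> 2"
  shows "\<exists>c1 c2 :: real. \<exists>N :: nat. c1 > 0 \<and> c2 > 0 \<and>
    (\<forall>n. n \<ge> N \<and> n \<ge> 2 * r \<longrightarrow>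
       ennreal (c1 * real n ^ r) \<le> bb_complexity n (Fork_class n r) \<and>
       bb_complexity n (Fork_class n r) \<le> ennreal (c2 * real n ^ r))"
proof -
  define c1 :: real where "c1 = 1 / (2 * (2 * real r) ^ r)"
  have r: "0 < r"
    using assms by simp
  have c1: "c1 * real n ^ r = (real n / (2 * real r)) ^ r / 2" for n
    by (simp add: c1_def power_divide)
  have "ennreal (c1 * real n ^ r) \<le> bb_complexity n (Fork_class n r) \<and>
      bb_complexity n (Fork_class n r) \<le> ennreal (3 * real n ^ r)" if "2 * r \<le> n" for n
  proof
    show "ennreal (c1 * real n ^ r) \<le> bb_complexity n (Fork_class n r)"
      unfolding c1 using bb_complexity_Fork_ge_power[OF r that] .
    show "bb_complexity n (Fork_class n r) \<le> ennreal (3 * real n ^ r)"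
      using bb_complexity_Fork_le_power[OF r] that r by simp
  qed
  moreover have "c1 > 0"
    using r by (simp add: c1_def)
  ultimately show ?thesis
    by (intro exI[of _ c1] exI[of _ 3] exI[of _ 0]) auto
qed

end
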